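(* For $k\ge1$ and $g\in\mathbb C[x_1^{\pm1},\dots,x_k^{\pm1}]^{S(k)}$ put $\widetilde E_k(g)=q_3^{\frac{k-k^2}2}(q_1^{-1}-1)^k\frac{\prod_{1\le r\ne s\le k}(x_r-q_1^{-1}x_s)\,g(x_1,\dots,x_k)}{\prod_{1\le r\ne s\le k}(x_r-x_s)}$ and $\widetilde F_k(g)=(q_2/q_1)^{\frac{k-k^2}2}(1-q_1)^k\frac{\prod_{1\le r\ne s\le k}(x_r-q_1^{-1}x_s)\,g(x_1,\dots,x_k)}{\prod_{1\le r\ne s\le k}(x_r-x_s)}$. Then (a) $\Phi^>(\widetilde E_k(g))=\sum_{J\subset\{1,\dots,a\},|J|=k}\Big\{\prod_{r\in J}^{s\notin J}\frac{w_r-q_2^{-1}w_s}{w_r-w_s}\prod_{r\in J}Z(w_r)\cdot g(\{w_r\}_{r\in J})\prod_{r\in J}D_r^{-1}\Big\}$; (b) $\Phi^<(\widetilde F_k(g))=\sum_{J\subset\{1,\dots,a\},|J|=k}\Big\{\prod_{r\in J}^{s\notin J}\frac{w_r-q_2w_s}{w_r-w_s}\cdot g(\{q_1w_r\}_{r\in J})\prod_{r\in J}D_r\Big\}$.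
   Context: Fix $q_1,q_2,q_3\in\mathbb C^\times$, not roots of unity, with $q_1q_2q_3=1$, and square roots $q_1^{1/2},q_2^{1/2}$. Fix $a\ge1$, $N\ge0$, $(z_1,\dots,z_N)\in(\mathbb C^\times)^N$, $Z(z)=\prod_{k=1}^N(1-z_k/z)$. $\widetilde{\mathcal A}^{q_1}$ is the $\mathbb C$-algebra generated by $D_r^{\pm1},w_r^{\pm1}$ ($1\le r\le a$), all commuting except $D_rw_s=q_1^{\delta_{rs}}w_sD_r$, localized at $w_r-q_1^mw_s$ ($r\ne s$, $m\in\mathbb Z$). Let $Y_r(z)=\frac{-1}{1-q_1^{-1}}Z(z)\prod_{s\ne r}\frac{z-w_sq_2^{-1}}{z-w_s}$, $Y'_r(z)=\frac{1}{1-q_1}\prod_{s\ne r}\frac{zq_1^{-1}-w_sq_2}{zq_1^{-1}-w_s}$, $\zeta(z/w)=\frac{\prod_{i=1}^3(z-q_i^{-1}w)}{(z-w)^3}$, $\varphi(z/w)=\frac{(q_1^{1/2}z-q_1^{-1/2}w)(q_2^{1/2}z-q_2^{-1/2}w)}{(z-w)^2}$. $\mathbb S=\bigoplus_k\mathbb S_k$ with $\mathbb S_k$ the space of $f/\prod_{r\ne s}(x_r-x_s)$, $f$ a symmetric Laurent polynomial over $\mathbb C$ in $x_1,\dots,x_k$, with the shuffle product $F\star G=\frac{1}{k!\ell!}\mathrm{Sym}(F(x_1..x_k)G(x_{k+1}..x_{k+\ell})\prod_{r\le k<r'}\zeta(x_r/x_{r'}))$; $\mathbb S^{\mathrm{op}}$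 has opposite product. The maps $\Phi^>:\mathbb S\to\widetilde{\mathcal A}^{q_1}$, $\Phi^<:\mathbb S^{\mathrm{op}}\to\widetilde{\mathcal A}^{q_1}$ are defined on degree $k$ by $\Phi^>(E)=\sum_{m_1+\dots+m_a=k}\{\prod_{r}\prod_{p\le m_r}Y_r(w_rq_1^{-(p-1)})\cdot E(\{w_rq_1^{-(p-1)}\}_{r}^{p\le m_r})\prod_r\prod_{p_1<p_2\le m_r}\zeta^{-1}(\frac{w_rq_1^{-(p_1-1)}}{w_rq_1^{-(p_2-1)}})\prod_{r_1\ne r_2}\prod_{p_1\le m_{r_1},p_2\le m_{r_2}}\varphi^{-1}(\frac{w_{r_1}q_1^{-(p_1-1)}}{w_{r_2}q_1^{-(p_2-1)}})\prod_rD_r^{-m_r}\}$, $\Phi^<(F)=\sum_{m_1+\dots+m_a=k}\{\prod_{r}\prod_{p\le m_r}Y'_r(w_rq_1^{p})\cdot F(\{w_rq_1^{p}\}_{r}^{p\le m_r})\prod_r\prod_{p_1<p_2\le m_r}\zeta^{-1}(\frac{w_rq_1^{p_2}}{w_rq_1^{p_1}})\prod_{r_1\ne r_2}\prod_{p_1,p_2}\varphi^{-1}(\frac{w_{r_2}q_1^{p_2}}{w_{r_1}q_1^{p_1}})\prod_rD_r^{m_r}\}$, with $m_r\in\mathbb N$, $\zeta^{-1}=1/\zeta$, $\varphi^{-1}=1/\varphi$. *)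

theory Defs
  imports Complex_Main "HOL-Library.Multiset"
begin

text \<open>Indices r range over {1..a}; w :: nat => complex gives w_1..w_a.
 An element of the localized quantum torus A~^{q1} is represented in normal-ordered form
 sum_n f_n(w) D^n by its coefficient map  n :: nat => int  (exponent vector)  |->  f_n,
 where f_n is a function of the point w.\<close>

type_synonym atilde = "(nat \<Rightarrow> int) \<Rightarrow> (nat \<Rightarrow> complex) \<Rightarrow> complex"

definition not_root_of_unity :: "complex \<Rightarrow> bool" where
  "not_root_of_unity q \<longleftrightarrow> q \<noteq> 0 \<and> (\<forall>n::nat. n > 0 \<longrightarrow> q ^ n \<noteq> 1)"

definition zeta :: "complex \<Rightarrow> complex \<Rightarrow> complex \<Rightarrow> complex \<Rightarrow> complex" where
  "zeta q1 q2 q3 x = (x - inverse q1) * (x - inverse q2) * (x - inverse q3) / (x - 1) ^ 3"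

definition phi :: "complex \<Rightarrow> complex \<Rightarrow> complex \<Rightarrow> complex" where
  "phi s1 s2 x = (s1 * x - inverse s1) * (s2 * x - inverse s2) / (x - 1) ^ 2"

definition Zf :: "complex list \<Rightarrow> complex \<Rightarrow> complex" where
  "Zf zs z = (\<Prod>i<length zs. 1 - zs ! i / z)"

definition Yf :: "complex \<Rightarrow> complex \<Rightarrow> complex list \<Rightarrow> nat \<Rightarrow> (nat \<Rightarrow> complex) \<Rightarrow> nat \<Rightarrow> complex \<Rightarrow> complex" where
  "Yf q1 q2 zs a w r z = (-1 / (1 - inverse q1)) * Zf zs z *
     (\<Prod>s\<in>{1..a} - {r}. (z - w s * inverse q2) / (z - w s))"

definition Yp :: "complex \<Rightarrow> complex \<Rightarrow> nat \<Rightarrow> (nat \<Rightarrow> complex) \<Rightarrow> nat \<Rightarrow> complex \<Rightarrow> complex" where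
  "Yp q1 q2 a w r z = (1 / (1 - q1)) *
     (\<Prod>s\<in>{1..a} - {r}. (z * inverse q1 - w s * q2) / (z * inverse q1 - w s))"

definition compositions :: "nat \<Rightarrow> nat \<Rightarrow> (nat \<Rightarrow> nat) set" where
  "compositions a k = {m. (\<forall>r. r \<notin> {1..a} \<longrightarrow> m r = 0) \<and> (\<Sum>r\<in>{1..a}. m r) = k}"

definition xgt :: "complex \<Rightarrow> (nat \<Rightarrow> complex) \<Rightarrow> nat \<Rightarrow> nat \<Rightarrow> complex" where
  "xgt q1 w r p = w r * q1 powi (1 - int p)"

definition xlt :: "complex \<Rightarrow> (nat \<Rightarrow> complex) \<Rightarrow> nat \<Rightarrow> nat \<Rightarrow> complex" where
  "xlt q1 w r p = w r * q1 powi (int p)"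

definition pts :: "(nat \<Rightarrow> nat \<Rightarrow> complex) \<Rightarrow> nat \<Rightarrow> (nat \<Rightarrow> nat) \<Rightarrow> complex list" where
  "pts x a m = concat (map (\<lambda>r. map (\<lambda>p. x r p) [1..<Suc (m r)]) [1..<Suc a])"

definition Phi_gt :: "complex \<Rightarrow> complex \<Rightarrow> complex \<Rightarrow> complex \<Rightarrow> complex \<Rightarrow> complex list \<Rightarrow> nat \<Rightarrow> nat
    \<Rightarrow> (complex list \<Rightarrow> complex) \<Rightarrow> atilde" where
  "Phi_gt q1 q2 q3 s1 s2 zs a k E = (\<lambda>n w. \<Sum>m\<in>compositions a k.
     if n = (\<lambda>r. - int (m r)) then
       (\<Prod>r\<in>{1..a}. \<Prod>p\<in>{1..m r}. Yf q1 q2 zs a w r (xgt q1 w r p))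
       * E (pts (xgt q1 w) a m)
       * (\<Prod>r\<in>{1..a}. \<Prod>p1\<in>{1..m r}. \<Prod>p2\<in>{1..m r}.
            if p1 < p2 then inverse (zeta q1 q2 q3 (xgt q1 w r p1 / xgt q1 w r p2)) else 1)
       * (\<Prod>r1\<in>{1..a}. \<Prod>r2\<in>{1..a} - {r1}. \<Prod>p1\<in>{1..m r1}. \<Prod>p2\<in>{1..m r2}.
            inverse (phi s1 s2 (xgt q1 w r1 p1 / xgt q1 w r2 p2)))
     else 0)"

definition Phi_lt :: "complex \<Rightarrow> complex \<Rightarrow> complex \<Rightarrow> complex \<Rightarrow> complex \<Rightarrow> nat \<Rightarrow> nat
    \<Rightarrow> (complex list \<Rightarrow> complex) \<Rightarrow> atilde" where
  "Phi_lt q1 q2 q3 s1 s2 a k F = (\<lambda>n w. \<Sum>m\<in>compositions a k.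
     if n = (\<lambda>r. int (m r)) then
       (\<Prod>r\<in>{1..a}. \<Prod>p\<in>{1..m r}. Yp q1 q2 a w r (xlt q1 w r p))
       * F (pts (xlt q1 w) a m)
       * (\<Prod>r\<in>{1..a}. \<Prod>p1\<in>{1..m r}. \<Prod>p2\<in>{1..m r}.
            if p1 < p2 then inverse (zeta q1 q2 q3 (xlt q1 w r p2 / xlt q1 w r p1)) else 1)
       * (\<Prod>r1\<in>{1..a}. \<Prod>r2\<in>{1..a} - {r1}. \<Prod>p1\<in>{1..m r1}. \<Prod>p2\<in>{1..m r2}.
            inverse (phi s1 s2 (xlt q1 w r2 p2 / xlt q1 w r1 p1)))
     else 0)"

definition laurent_poly :: "nat \<Rightarrow> (complex list \<Rightarrow> complex) \<Rightarrow> bool" where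
  "laurent_poly k g \<longleftrightarrow> (\<exists>A c. finite A \<and> (\<forall>xs. length xs = k \<longrightarrow>
      g xs = (\<Sum>e\<in>A. c e * (\<Prod>i<k. (xs ! i) powi (e i)))))"

definition symmetric_fun :: "nat \<Rightarrow> (complex list \<Rightarrow> complex) \<Rightarrow> bool" where
  "symmetric_fun k g \<longleftrightarrow> (\<forall>xs ys. length xs = k \<longrightarrow> mset xs = mset ys \<longrightarrow> g xs = g ys)"

definition E_tilde :: "complex \<Rightarrow> complex \<Rightarrow> nat \<Rightarrow> (complex list \<Rightarrow> complex) \<Rightarrow> complex list \<Rightarrow> complex" where
  "E_tilde q1 q3 k g xs = q3 powi (- int (k * (k - 1) div 2)) * (inverse q1 - 1) ^ k
     * (\<Prod>r<k. \<Prod>s\<in>{..<k} - {r}. xs ! r - inverse q1 * xs ! s) * g xs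
     / (\<Prod>r<k. \<Prod>s\<in>{..<k} - {r}. xs ! r - xs ! s)"

definition F_tilde :: "complex \<Rightarrow> complex \<Rightarrow> nat \<Rightarrow> (complex list \<Rightarrow> complex) \<Rightarrow> complex list \<Rightarrow> complex" where
  "F_tilde q1 q2 k g xs = (q2 / q1) powi (- int (k * (k - 1) div 2)) * (1 - q1) ^ k
     * (\<Prod>r<k. \<Prod>s\<in>{..<k} - {r}. xs ! r - inverse q1 * xs ! s) * g xs
     / (\<Prod>r<k. \<Prod>s\<in>{..<k} - {r}. xs ! r - xs ! s)"

definition RHS_a :: "complex \<Rightarrow> complex list \<Rightarrow> nat \<Rightarrow> nat \<Rightarrow> (complex list \<Rightarrow> complex) \<Rightarrow> atilde" where
  "RHS_a q2 zs a k g = (\<lambda>n w. \<Sum>J\<in>{J. J \<subseteq> {1..a} \<and> card J = k}.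
     if n = (\<lambda>r. if r \<in> J then -1 else 0) then
       (\<Prod>r\<in>J. \<Prod>s\<in>{1..a} - J. (w r - inverse q2 * w s) / (w r - w s))
       * (\<Prod>r\<in>J. Zf zs (w r)) * g (map w (sorted_list_of_set J))
     else 0)"

definition RHS_b :: "complex \<Rightarrow> complex \<Rightarrow> nat \<Rightarrow> nat \<Rightarrow> (complex list \<Rightarrow> complex) \<Rightarrow> atilde" where
  "RHS_b q1 q2 a k g = (\<lambda>n w. \<Sum>J\<in>{J. J \<subseteq> {1..a} \<and> card J = k}.
     if n = (\<lambda>r. if r \<in> J then 1 else 0) then
       (\<Prod>r\<in>J. \<Prod>s\<in>{1..a} - J. (w r - q2 * w s) / (w r - w s))
       * g (map (\<lambda>r. q1 * w r) (sorted_list_of_set J))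
     else 0)"

text \<open>Generic points w: all w_r nonzero and no ratio w_r/w_s (r \<noteq> s) lies in the
 group generated by q1, q2 (this inverts all w_r - q1^m w_s and every other denominator).\<close>
definition generic_w :: "complex \<Rightarrow> complex \<Rightarrow> nat \<Rightarrow> (nat \<Rightarrow> complex) \<Rightarrow> bool" where
  "generic_w q1 q2 a w \<longleftrightarrow> (\<forall>r\<in>{1..a}. w r \<noteq> 0) \<and>
     (\<forall>r\<in>{1..a}. \<forall>s\<in>{1..a}. r \<noteq> s \<longrightarrow> (\<forall>i j::int. w r \<noteq> q1 powi i * q2 powi j * w s))"

end

theory Submission
  imports Defs
begin

(* Only compositions m with all m_r \<le> 1 contribute: if m_r \<ge> 2, the evaluation points contain
   both x and x/q1 (w_r and w_r/q1 for \<Phi>^>, q1 w_r and q1^2 w_r for \<Phi>^<), so the factor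
   \<Prod>(x_r - q1^-1 x_s) in the numerator of E~_k, resp. F~_k, vanishes. The remaining compositions
   are the indicator functions of the k-subsets J of {1..a}, where all evaluation points are w_r,
   resp. q1 w_r, for r \<in> J and the \<zeta>-factors are empty. Each Y_r splits into a factor over
   s \<notin> J, which survives, and one over s \<in> J. For every unordered pair {r, s} \<subseteq> J the in-J
   factors of Y, of E~_k (resp. F~_k) and of \<phi>^-1 multiply to the constant 1/(q1 q2), resp. q2/q1;
   the resulting power cancels the prefactor q3^((k-k^2)/2), resp. (q2/q1)^((k-k^2)/2), and the
   constants of the Y's cancel (q1^-1 - 1)^k, resp. (1 - q1)^k. *)

lemma sorted_list_of_set_eq_filter_upt:
  assumes "J \<subseteq> {1..a}"
  shows "sorted_list_of_set J = filter (\<lambda>r. r \<in> J) [1..<Suc a]"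
proof -
  have "set (filter (\<lambda>r. r \<in> J) [1..<Suc a]) = J"
    using assms by (auto simp del: upt_Suc)
  moreover have "sorted_list_of_set (set (filter (\<lambda>r. r \<in> J) [1..<Suc a]))
      = filter (\<lambda>r. r \<in> J) [1..<Suc a]"
    by (rule sorted_list_of_set.idem_if_sorted_distinct) (simp_all del: upt_Suc add: sorted_wrt_filter)
  ultimately show ?thesis by simp
qed

lemma length_pts: "length (pts x a m) = (\<Sum>r\<in>{1..a}. m r)"
  by (simp del: upt_Suc add: pts_def length_concat comp_def atLeastLessThanSuc_atLeastAtMost
      flip: sum_set_upt_conv_sum_list_nat)

lemma mem_pts: "r \<in> {1..a} \<Longrightarrow> p \<in> {1..m r} \<Longrightarrow> x r p \<in> set (pts x a m)"
  by (auto simp del: upt_Suc simp: pts_def intro!: bexI[of _ r])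

lemma pts_of_bool:
  assumes "J \<subseteq> {1..a}"
  shows "pts x a (\<lambda>r. of_bool (r \<in> J)) = map (\<lambda>r. x r 1) (sorted_list_of_set J)"
proof -
  have "concat (map (\<lambda>r. map (x r) [1..<Suc (of_bool (r \<in> J))]) rs)
      = map (\<lambda>r. x r 1) (filter (\<lambda>r. r \<in> J) rs)" for rs
    by (induction rs) auto
  then show ?thesis
    by (simp del: upt_Suc add: pts_def sorted_list_of_set_eq_filter_upt[OF assms])
qed

lemma finite_compositions: "finite (compositions a k)"
proof (rule finite_subset)
  show "compositions a k
      \<subseteq> {m. \<forall>r. (r \<in> {1..a} \<longrightarrow> m r \<in> {0..k}) \<and> (r \<notin> {1..a} \<longrightarrow> m r = 0)}"
    by (auto simp: compositions_def intro: member_le_sum[THEN order_trans, of _ "{1..a}"])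
qed (intro finite_set_of_finite_funs; simp)

lemma sum_compositions_eq_sum_subsets:
  assumes "\<And>m r. m \<in> compositions a k \<Longrightarrow> 2 \<le> m r \<Longrightarrow> T m = 0"
  shows "(\<Sum>m\<in>compositions a k. T m)
       = (\<Sum>J | J \<subseteq> {1..a} \<and> card J = k. T (\<lambda>r. of_bool (r \<in> J)))"
proof -
  let ?C = "{m \<in> compositions a k. \<forall>r. m r \<le> 1}"
  have "T m = 0" if "m \<in> compositions a k - ?C" for m
    using that assms[of m] by (auto simp: not_le Suc_le_eq numeral_2_eq_2)
  then have "(\<Sum>m\<in>compositions a k. T m) = (\<Sum>m\<in>?C. T m)"
    by (intro sum.mono_neutral_right finite_compositions) auto
  also have "\<dots> = (\<Sum>J | J \<subseteq> {1..a} \<and> card J = k. T (\<lambda>r. of_bool (r \<in> J)))"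
  proof (rule sum.reindex_bij_witness[where i = "\<lambda>J r. of_bool (r \<in> J)" and j = "\<lambda>m. {r. m r = 1}"])
    fix m assume m: "m \<in> ?C"
    then show support_of_bool: "(\<lambda>r. of_bool (r \<in> {r. m r = 1})) = m"
      by (force simp: le_Suc_eq)
    then show "T (\<lambda>r. of_bool (r \<in> {r. m r = 1})) = T m"
      by simp
    have support: "{r. m r = 1} \<subseteq> {1..a}"
      using m by (auto simp: compositions_def)
    then have "card {r. m r = 1} = (\<Sum>r\<in>{1..a}. of_bool (r \<in> {r. m r = 1}))"
      by (simp add: Int_absorb1)
    also have "\<dots> = k"
      using m by (simp only: support_of_bool) (simp add: compositions_def)
    finally show "{r. m r = 1} \<in> {J. J \<subseteq> {1..a} \<and> card J = k}"
      using support by simp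
  next
    fix J assume "J \<in> {J. J \<subseteq> {1..a} \<and> card J = k}"
    then show "(\<lambda>r. of_bool (r \<in> J)) \<in> ?C"
      by (auto simp: compositions_def Int_absorb1)
  qed auto
  finally show ?thesis .
qed

lemma prod_atLeastAtMost_of_bool: "(\<Prod>p\<in>{1..of_bool P :: nat}. f p) = (if P then f 1 else 1)"
  by (cases P) auto

lemma prod_prod_atLeastAtMost_of_bool:
  fixes f :: "'i \<Rightarrow> nat \<Rightarrow> 'a::comm_monoid_mult"
  assumes "finite I"
  shows "(\<Prod>r\<in>I. \<Prod>p\<in>{1..of_bool (r \<in> J)}. f r p) = (\<Prod>r\<in>I \<inter> J. f r 1)"
  unfolding prod_atLeastAtMost_of_bool using assms by (rule prod.inter_restrict[symmetric])

lemma prod_offdiag_atLeastAtMost_of_bool: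
  fixes f :: "'i \<Rightarrow> 'i \<Rightarrow> nat \<Rightarrow> nat \<Rightarrow> 'a::comm_monoid_mult"
  assumes "finite I" "J \<subseteq> I"
  shows "(\<Prod>r1\<in>I. \<Prod>r2\<in>I - {r1}. \<Prod>p1\<in>{1..of_bool (r1 \<in> J)}. \<Prod>p2\<in>{1..of_bool (r2 \<in> J)}.
           f r1 r2 p1 p2)
       = (\<Prod>r1\<in>J. \<Prod>r2\<in>J - {r1}. f r1 r2 1 1)"
proof -
  have "(\<Prod>r1\<in>I. \<Prod>r2\<in>I - {r1}. \<Prod>p1\<in>{1..of_bool (r1 \<in> J)}. \<Prod>p2\<in>{1..of_bool (r2 \<in> J)}.
          f r1 r2 p1 p2)
      = (\<Prod>r1\<in>I. \<Prod>p1\<in>{1..of_bool (r1 \<in> J)}. \<Prod>r2\<in>I - {r1}. \<Prod>p2\<in>{1..of_bool (r2 \<in> J)}.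
          f r1 r2 p1 p2)"
    by (rule prod.cong[OF refl prod.swap])
  also have "\<dots> = (\<Prod>r1\<in>I. \<Prod>p1\<in>{1..of_bool (r1 \<in> J)}. \<Prod>r2\<in>(I - {r1}) \<inter> J. f r1 r2 p1 1)"
    using assms(1) by (simp only: prod_prod_atLeastAtMost_of_bool finite_Diff)
  also have "\<dots> = (\<Prod>r1\<in>I \<inter> J. \<Prod>r2\<in>(I - {r1}) \<inter> J. f r1 r2 1 1)"
    using assms(1) by (rule prod_prod_atLeastAtMost_of_bool)
  also have "\<dots> = (\<Prod>r1\<in>J. \<Prod>r2\<in>J - {r1}. f r1 r2 1 1)"
    using assms(2) by (intro prod.cong) auto
  finally show ?thesis .
qed

lemma prod_offdiag_nth:
  assumes "distinct xs"
  shows "(\<Prod>i<length xs. \<Prod>j\<in>{..<length xs} - {i}. f (xs ! i) (xs ! j))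
       = (\<Prod>x\<in>set xs. \<Prod>y\<in>set xs - {x}. f x y)"
proof -
  have bij: "bij_betw ((!) xs) {..<length xs} (set xs)"
    using assms by (simp add: bij_betw_nth)
  have "bij_betw ((!) xs) ({..<length xs} - {i}) (set xs - {xs ! i})" if "i < length xs" for i
    using that by (intro bij_betw_DiffI[OF bij]) (auto simp: bij_betw_def)
  then have "(\<Prod>j\<in>{..<length xs} - {i}. f (xs ! i) (xs ! j)) = (\<Prod>y\<in>set xs - {xs ! i}. f (xs ! i) y)"
    if "i < length xs" for i
    using that by (simp add: prod.reindex_bij_betw)
  then show ?thesis
    using prod.reindex_bij_betw[OF bij, of "\<lambda>x. \<Prod>y\<in>set xs - {x}. f x y"] by simp
qed

lemma prod_offdiag_eq_0:
  assumes "x \<in> set xs" "y \<in> set xs" "x \<noteq> y" "f x y = (0::'a::comm_semiring_1)"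
  shows "(\<Prod>i<length xs. \<Prod>j\<in>{..<length xs} - {i}. f (xs ! i) (xs ! j)) = 0"
proof -
  obtain i j where "i < length xs" "j < length xs" "xs ! i = x" "xs ! j = y"
    using assms(1,2) by (auto simp: in_set_conv_nth)
  with assms(3,4) show ?thesis
    by (intro prod_zero bexI[of _ i] bexI[of _ j]) auto
qed

lemma prod_offdiag_eq_power_choose:
  fixes h :: "'i \<Rightarrow> 'i \<Rightarrow> 'a::comm_monoid_mult"
  assumes "finite J" "\<And>r s. r \<in> J \<Longrightarrow> s \<in> J \<Longrightarrow> r \<noteq> s \<Longrightarrow> h r s * h s r = c"
  shows "(\<Prod>r\<in>J. \<Prod>s\<in>J - {r}. h r s) = c ^ (card J choose 2)"
  using assms
proof (induction J rule: finite_induct)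
  case (insert x F)
  have "insert x F - {r} = insert x (F - {r})" if "r \<in> F" for r
    using that insert.hyps(2) by auto
  then have "(\<Prod>r\<in>insert x F. \<Prod>s\<in>insert x F - {r}. h r s)
      = (\<Prod>s\<in>F. h x s) * (\<Prod>r\<in>F. h r x * (\<Prod>s\<in>F - {r}. h r s))"
    using insert.hyps by (simp add: insert_Diff_if)
  also have "\<dots> = (\<Prod>s\<in>F. h x s * h s x) * (\<Prod>r\<in>F. \<Prod>s\<in>F - {r}. h r s)"
    by (simp add: prod.distrib mult_ac)
  also have "\<dots> = (\<Prod>s\<in>F. c) * c ^ (card F choose 2)"
    using insert by (intro arg_cong2[where f = "(*)"] prod.cong) auto
  also have "\<dots> = c ^ (card (insert x F) choose 2)"
    using insert.hyps by (simp add: numeral_2_eq_2 power_add)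
  finally show ?case .
qed (simp add: numeral_2_eq_2)

lemma offdiag_cancellation:
  fixes A B C P :: "'i \<Rightarrow> 'i \<Rightarrow> 'a::field" and Z :: "'i \<Rightarrow> 'a"
  assumes "finite I" "J \<subseteq> I" "c * d = 1" "\<kappa> * \<rho> ^ (card J * (card J - 1) div 2) = 1"
    and pair: "\<And>r s. r \<in> J \<Longrightarrow> s \<in> J \<Longrightarrow> r \<noteq> s \<Longrightarrow>
      A r s * (B r s / C r s) * P r s * (A s r * (B s r / C s r) * P s r) = \<rho>"
  shows "(\<Prod>r\<in>J. c * Z r * (\<Prod>s\<in>I - {r}. A r s))
         * (\<kappa> * d ^ card J * (\<Prod>r\<in>J. \<Prod>s\<in>J - {r}. B r s) * G / (\<Prod>r\<in>J. \<Prod>s\<in>J - {r}. C r s))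
         * (\<Prod>r\<in>J. \<Prod>s\<in>J - {r}. P r s)
       = (\<Prod>r\<in>J. \<Prod>s\<in>I - J. A r s) * (\<Prod>r\<in>J. Z r) * G"
proof -
  have "finite J" using assms(1,2) finite_subset by blast
  have "(\<Prod>s\<in>I - {r}. A r s) = (\<Prod>s\<in>J - {r}. A r s) * (\<Prod>s\<in>I - J. A r s)" if "r \<in> J" for r
  proof -
    have "I - {r} = (J - {r}) \<union> (I - J)" using assms(2) that by auto
    then have "(\<Prod>s\<in>I - {r}. A r s) = (\<Prod>s\<in>(J - {r}) \<union> (I - J). A r s)"
      by simp
    also have "\<dots> = (\<Prod>s\<in>J - {r}. A r s) * (\<Prod>s\<in>I - J. A r s)"
      using assms(1) \<open>finite J\<close> by (intro prod.union_disjoint) auto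
    finally show ?thesis .
  qed
  then have Y: "(\<Prod>r\<in>J. c * Z r * (\<Prod>s\<in>I - {r}. A r s))
      = c ^ card J * (\<Prod>r\<in>J. Z r) * (\<Prod>r\<in>J. \<Prod>s\<in>J - {r}. A r s) * (\<Prod>r\<in>J. \<Prod>s\<in>I - J. A r s)"
    by (simp add: prod.distrib)
  have pairs: "(\<Prod>r\<in>J. \<Prod>s\<in>J - {r}. A r s)
      * ((\<Prod>r\<in>J. \<Prod>s\<in>J - {r}. B r s) / (\<Prod>r\<in>J. \<Prod>s\<in>J - {r}. C r s))
      * (\<Prod>r\<in>J. \<Prod>s\<in>J - {r}. P r s) = \<rho> ^ (card J * (card J - 1) div 2)"
    using prod_offdiag_eq_power_choose[OF \<open>finite J\<close>, of "\<lambda>r s. A r s * (B r s / C r s) * P r s" \<rho>] pair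
    by (simp add: prod.distrib prod_dividef choose_two)
  have regroup: "cn * Zs * PA * Q * (\<kappa> * dn * PB * G / PC) * PP
      = cn * dn * (\<kappa> * (PA * (PB / PC) * PP)) * (Q * Zs * G)" for cn dn Zs PA PB PC PP Q :: 'a
    by (simp add: divide_inverse mult_ac)
  show ?thesis
    unfolding Y regroup pairs using assms(3,4) by (simp flip: power_mult_distrib)
qed

lemma inverse_phi:
  fixes u v :: complex
  assumes "s1\<^sup>2 = q1" "s2\<^sup>2 = q2" "s1 \<noteq> 0" "s2 \<noteq> 0" "v \<noteq> 0"
    and "u \<noteq> v" "q1 * u \<noteq> v" "q2 * u \<noteq> v"
  shows "inverse (phi s1 s2 (u / v)) = s1 * s2 * (u - v)\<^sup>2 / ((q1 * u - v) * (q2 * u - v))"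
proof -
  have factors: "s1 * (u / v) - inverse s1 = (q1 * u - v) / (s1 * v)"
    "s2 * (u / v) - inverse s2 = (q2 * u - v) / (s2 * v)" "u / v - 1 = (u - v) / v"
    using assms(1-5) by (auto simp: field_simps power2_eq_square)
  have "inverse (X / (s1 * v) * (Y / (s2 * v)) / (D / v)\<^sup>2) = s1 * s2 * D\<^sup>2 / (X * Y)"
    if "X \<noteq> 0" "Y \<noteq> 0" "D \<noteq> 0" for X Y D :: complex
    using that assms(3-5) by (simp add: field_simps power2_eq_square)
  then show ?thesis
    unfolding phi_def factors using assms(6-) by (simp add: power_divide)
qed

lemma phi_factor_gt:
  fixes u v :: complex
  assumes "s1\<^sup>2 = q1" "s2\<^sup>2 = q2" "s1 \<noteq> 0" "s2 \<noteq> 0" "v \<noteq> 0"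
    and "u \<noteq> v" "q1 * u \<noteq> v" "q2 * u \<noteq> v"
  shows "(u - inverse q2 * v) / (u - v) * ((u - inverse q1 * v) / (u - v)) * inverse (phi s1 s2 (u / v))
       = s1 * s2 / (q1 * q2)"
proof -
  have "q1 \<noteq> 0" "q2 \<noteq> 0" using assms(1-4) by auto
  then have factors: "u - inverse q2 * v = (q2 * u - v) / q2" "u - inverse q1 * v = (q1 * u - v) / q1"
    by (simp_all add: field_simps)
  have "Y / q2 / D * (X / q1 / D) * (s1 * s2 * D\<^sup>2 / (X * Y)) = s1 * s2 / (q1 * q2)"
    if "X \<noteq> 0" "Y \<noteq> 0" "D \<noteq> 0" for X Y D :: complex
    using that \<open>q1 \<noteq> 0\<close> \<open>q2 \<noteq> 0\<close> by (simp add: field_simps power2_eq_square)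
  then show ?thesis
    unfolding factors inverse_phi[OF assms] using assms(6-) by (metis eq_iff_diff_eq_0)
qed

lemma phi_factor_lt:
  fixes u v :: complex
  assumes "s1\<^sup>2 = q1" "s2\<^sup>2 = q2" "s1 \<noteq> 0" "s2 \<noteq> 0" "u \<noteq> 0"
    and "u \<noteq> v" "q1 * v \<noteq> u" "q2 * v \<noteq> u"
  shows "(u - q2 * v) / (u - v) * ((q1 * u - v) / (q1 * (u - v))) * inverse (phi s1 s2 (v / u))
       = - s1 * s2 * (q1 * u - v) / (q1 * (q1 * v - u))"
proof -
  have "q1 \<noteq> 0" using assms(1,3) by auto
  have factors: "u - q2 * v = - (q2 * v - u)" "(v - u)\<^sup>2 = (u - v)\<^sup>2"
    by (simp_all add: power2_commute)
  have "- Y / D * (X1 / (q1 * D)) * (s1 * s2 * D\<^sup>2 / (X2 * Y)) = - s1 * s2 * X1 / (q1 * X2)"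
    if "X2 \<noteq> 0" "Y \<noteq> 0" "D \<noteq> 0" for X1 X2 Y D :: complex
    using that \<open>q1 \<noteq> 0\<close> by (simp add: field_simps power2_eq_square)
  then show ?thesis
    unfolding factors(1) inverse_phi[OF assms(1-5) assms(6)[symmetric] assms(7,8)] factors(2)
    using assms(6-) by (metis eq_iff_diff_eq_0)
qed

lemma phi_pair_gt:
  fixes u v :: complex
  assumes "s1\<^sup>2 = q1" "s2\<^sup>2 = q2" "s1 \<noteq> 0" "s2 \<noteq> 0" "u \<noteq> 0" "v \<noteq> 0"
    and "u \<noteq> v" "q1 * u \<noteq> v" "q1 * v \<noteq> u" "q2 * u \<noteq> v" "q2 * v \<noteq> u"
  shows "(u - inverse q2 * v) / (u - v) * ((u - inverse q1 * v) / (u - v)) * inverse (phi s1 s2 (u / v))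
       * ((v - inverse q2 * u) / (v - u) * ((v - inverse q1 * u) / (v - u)) * inverse (phi s1 s2 (v / u)))
       = inverse (q1 * q2)"
proof -
  have "s1 * s2 / (q1 * q2) * (s1 * s2 / (q1 * q2)) = inverse (q1 * q2)"
    using assms(1-4) by (auto simp: field_simps power2_eq_square)
  then show ?thesis
    unfolding phi_factor_gt[OF assms(1-4,6-8,10)]
      phi_factor_gt[OF assms(1-5) assms(7)[symmetric] assms(9,11)] .
qed

lemma phi_pair_lt:
  fixes u v :: complex
  assumes "s1\<^sup>2 = q1" "s2\<^sup>2 = q2" "s1 \<noteq> 0" "s2 \<noteq> 0" "u \<noteq> 0" "v \<noteq> 0"
    and "u \<noteq> v" "q1 * u \<noteq> v" "q1 * v \<noteq> u" "q2 * u \<noteq> v" "q2 * v \<noteq> u"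
  shows "(u - q2 * v) / (u - v) * ((q1 * u - v) / (q1 * (u - v))) * inverse (phi s1 s2 (v / u))
       * ((v - q2 * u) / (v - u) * ((q1 * v - u) / (q1 * (v - u))) * inverse (phi s1 s2 (u / v)))
       = q2 / q1"
proof -
  have "- s1 * s2 * X / (q1 * Y) * (- s1 * s2 * Y / (q1 * X)) = q2 / q1"
    if "X \<noteq> 0" "Y \<noteq> 0" for X Y :: complex
    using that assms(3,4) by (simp add: field_simps power2_eq_square flip: assms(1,2))
  then have "- s1 * s2 * (q1 * u - v) / (q1 * (q1 * v - u))
      * (- s1 * s2 * (q1 * v - u) / (q1 * (q1 * u - v))) = q2 / q1"
    using assms(8,9) by (metis eq_iff_diff_eq_0)
  then show ?thesis
    unfolding phi_factor_lt[OF assms(1-5,7,9,11)]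
      phi_factor_lt[OF assms(1-4,6) assms(7)[symmetric] assms(8,10)] .
qed

lemma generic_wD:
  assumes "generic_w q1 q2 a w" "r \<in> {1..a}" "s \<in> {1..a}" "r \<noteq> s"
  shows "w r \<noteq> 0" "w r \<noteq> w s" "q1 * w r \<noteq> w s" "q2 * w r \<noteq> w s"
proof -
  have "w s \<noteq> q1 powi i * q2 powi j * w r" for i j
    using assms unfolding generic_w_def by simp
  from this[of 0 0] this[of 1 0] this[of 0 1]
  show "w r \<noteq> w s" "q1 * w r \<noteq> w s" "q2 * w r \<noteq> w s"
    by auto
  show "w r \<noteq> 0"
    using assms(1,2) unfolding generic_w_def by simp
qed

lemma E_tilde_pts_eq_0:
  assumes "q1 \<noteq> 0" "q1 \<noteq> 1" "generic_w q1 q2 a w" "m \<in> compositions a k" "2 \<le> m r"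
  shows "E_tilde q1 q3 k g (pts (xgt q1 w) a m) = 0"
proof -
  have r: "r \<in> {1..a}" using assms(4,5) by (auto simp: compositions_def)
  then have "w r \<noteq> 0" using assms(3) by (simp add: generic_w_def)
  have "(\<Prod>i<length (pts (xgt q1 w) a m). \<Prod>j\<in>{..<length (pts (xgt q1 w) a m)} - {i}.
      pts (xgt q1 w) a m ! i - inverse q1 * pts (xgt q1 w) a m ! j) = 0"
  proof (rule prod_offdiag_eq_0[of "xgt q1 w r 2" _ "xgt q1 w r 1"])
    show "xgt q1 w r 2 \<in> set (pts (xgt q1 w) a m)" "xgt q1 w r 1 \<in> set (pts (xgt q1 w) a m)"
      using r assms(5) by (auto intro: mem_pts)
    show "xgt q1 w r 2 \<noteq> xgt q1 w r 1" "xgt q1 w r 2 - inverse q1 * xgt q1 w r 1 = 0"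
      using assms(1,2) \<open>w r \<noteq> 0\<close> by (simp_all add: xgt_def power_int_minus)
  qed
  moreover have "length (pts (xgt q1 w) a m) = k"
    using assms(4) by (simp add: length_pts compositions_def)
  ultimately show ?thesis by (simp add: E_tilde_def)
qed

lemma F_tilde_pts_eq_0:
  assumes "q1 \<noteq> 0" "q1 \<noteq> 1" "generic_w q1 q2 a w" "m \<in> compositions a k" "2 \<le> m r"
  shows "F_tilde q1 q2 k g (pts (xlt q1 w) a m) = 0"
proof -
  have r: "r \<in> {1..a}" using assms(4,5) by (auto simp: compositions_def)
  then have "w r \<noteq> 0" using assms(3) by (simp add: generic_w_def)
  have "(\<Prod>i<length (pts (xlt q1 w) a m). \<Prod>j\<in>{..<length (pts (xlt q1 w) a m)} - {i}.
      pts (xlt q1 w) a m ! i - inverse q1 * pts (xlt q1 w) a m ! j) = 0"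
  proof (rule prod_offdiag_eq_0[of "xlt q1 w r 1" _ "xlt q1 w r 2"])
    show "xlt q1 w r 1 \<in> set (pts (xlt q1 w) a m)" "xlt q1 w r 2 \<in> set (pts (xlt q1 w) a m)"
      using r assms(5) by (auto intro: mem_pts)
    show "xlt q1 w r 1 \<noteq> xlt q1 w r 2" "xlt q1 w r 1 - inverse q1 * xlt q1 w r 2 = 0"
      using assms(1,2) \<open>w r \<noteq> 0\<close> by (simp_all add: xlt_def power2_eq_square)
  qed
  moreover have "length (pts (xlt q1 w) a m) = k"
    using assms(4) by (simp add: length_pts compositions_def)
  ultimately show ?thesis by (simp add: F_tilde_def)
qed

lemma Phi_gt_summand_of_bool:
  fixes w :: "nat \<Rightarrow> complex"
  assumes q: "q1 \<noteq> 1" "s1\<^sup>2 = q1" "s2\<^sup>2 = q2" "s1 \<noteq> 0" "s2 \<noteq> 0" "q3 = inverse (q1 * q2)"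
    and gw: "generic_w q1 q2 a w" and J: "J \<subseteq> {1..a}" "card J = k"
  shows "(\<Prod>r\<in>{1..a}. \<Prod>p\<in>{1..of_bool (r \<in> J)}. Yf q1 q2 zs a w r (xgt q1 w r p))
       * E_tilde q1 q3 k g (pts (xgt q1 w) a (\<lambda>r. of_bool (r \<in> J)))
       * (\<Prod>r\<in>{1..a}. \<Prod>p1\<in>{1..of_bool (r \<in> J)}. \<Prod>p2\<in>{1..of_bool (r \<in> J)}.
            if p1 < p2 then inverse (zeta q1 q2 q3 (xgt q1 w r p1 / xgt q1 w r p2)) else 1)
       * (\<Prod>r1\<in>{1..a}. \<Prod>r2\<in>{1..a} - {r1}. \<Prod>p1\<in>{1..of_bool (r1 \<in> J)}. \<Prod>p2\<in>{1..of_bool (r2 \<in> J)}.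
            inverse (phi s1 s2 (xgt q1 w r1 p1 / xgt q1 w r2 p2)))
     = (\<Prod>r\<in>J. \<Prod>s\<in>{1..a} - J. (w r - inverse q2 * w s) / (w r - w s))
       * (\<Prod>r\<in>J. Zf zs (w r)) * g (map w (sorted_list_of_set J))"
proof -
  have "q1 \<noteq> 0" "q2 \<noteq> 0" using q(2-5) by auto
  have x1: "xgt q1 w r 1 = w r" for r by (simp add: xgt_def)
  have zeta: "(\<Prod>r\<in>{1..a}. \<Prod>p1\<in>{1..of_bool (r \<in> J)}. \<Prod>p2\<in>{1..of_bool (r \<in> J)}.
      if p1 < p2 then inverse (zeta q1 q2 q3 (xgt q1 w r p1 / xgt q1 w r p2)) else 1) = 1"
    unfolding prod_atLeastAtMost_of_bool by (simp cong: if_cong)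
  have Y: "(\<Prod>r\<in>{1..a}. \<Prod>p\<in>{1..of_bool (r \<in> J)}. Yf q1 q2 zs a w r (xgt q1 w r p))
      = (\<Prod>r\<in>J. -1 / (1 - inverse q1) * Zf zs (w r)
          * (\<Prod>s\<in>{1..a} - {r}. (w r - inverse q2 * w s) / (w r - w s)))"
    unfolding prod_prod_atLeastAtMost_of_bool[OF finite_atLeastAtMost] Int_absorb1[OF J(1)] x1
    by (simp add: Yf_def ac_simps)
  have E: "E_tilde q1 q3 k g (pts (xgt q1 w) a (\<lambda>r. of_bool (r \<in> J)))
      = q3 powi - int (card J * (card J - 1) div 2) * (inverse q1 - 1) ^ card J
        * (\<Prod>r\<in>J. \<Prod>s\<in>J - {r}. w r - inverse q1 * w s) * g (map w (sorted_list_of_set J))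
        / (\<Prod>r\<in>J. \<Prod>s\<in>J - {r}. w r - w s)"
    using prod_offdiag_nth[of "sorted_list_of_set J" "\<lambda>r s. w r - inverse q1 * w s"]
      prod_offdiag_nth[of "sorted_list_of_set J" "\<lambda>r s. w r - w s"] finite_subset[OF J(1)]
    unfolding pts_of_bool[OF J(1)] x1 E_tilde_def J(2)[symmetric] by simp
  have Ph: "(\<Prod>r1\<in>{1..a}. \<Prod>r2\<in>{1..a} - {r1}. \<Prod>p1\<in>{1..of_bool (r1 \<in> J)}. \<Prod>p2\<in>{1..of_bool (r2 \<in> J)}.
      inverse (phi s1 s2 (xgt q1 w r1 p1 / xgt q1 w r2 p2)))
      = (\<Prod>r\<in>J. \<Prod>s\<in>J - {r}. inverse (phi s1 s2 (w r / w s)))"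
    unfolding prod_offdiag_atLeastAtMost_of_bool[OF finite_atLeastAtMost J(1)] x1 ..
  show ?thesis
    unfolding zeta mult_1_right unfolding Y E Ph
  proof (rule trans[OF offdiag_cancellation[OF finite_atLeastAtMost J(1), where \<rho> = "inverse (q1 * q2)"]],
      goal_cases)
    case 1
    have "1 - inverse q1 \<noteq> 0" using q(1) \<open>q1 \<noteq> 0\<close> by (simp add: field_simps)
    then show ?case by (simp add: field_simps)
  next
    case 2
    show ?case using q(6) \<open>q1 \<noteq> 0\<close> \<open>q2 \<noteq> 0\<close> by (simp add: power_int_minus)
  next
    case (3 r s)
    then have "r \<in> {1..a}" "s \<in> {1..a}" using J(1) by auto
    with 3 show ?case
      by (intro phi_pair_gt) (use q generic_wD[OF gw] in auto)
  qed simp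
qed

lemma Phi_lt_summand_of_bool:
  fixes w :: "nat \<Rightarrow> complex"
  assumes q: "q1 \<noteq> 1" "s1\<^sup>2 = q1" "s2\<^sup>2 = q2" "s1 \<noteq> 0" "s2 \<noteq> 0"
    and gw: "generic_w q1 q2 a w" and J: "J \<subseteq> {1..a}" "card J = k"
  shows "(\<Prod>r\<in>{1..a}. \<Prod>p\<in>{1..of_bool (r \<in> J)}. Yp q1 q2 a w r (xlt q1 w r p))
       * F_tilde q1 q2 k g (pts (xlt q1 w) a (\<lambda>r. of_bool (r \<in> J)))
       * (\<Prod>r\<in>{1..a}. \<Prod>p1\<in>{1..of_bool (r \<in> J)}. \<Prod>p2\<in>{1..of_bool (r \<in> J)}.
            if p1 < p2 then inverse (zeta q1 q2 q3 (xlt q1 w r p2 / xlt q1 w r p1)) else 1)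
       * (\<Prod>r1\<in>{1..a}. \<Prod>r2\<in>{1..a} - {r1}. \<Prod>p1\<in>{1..of_bool (r1 \<in> J)}. \<Prod>p2\<in>{1..of_bool (r2 \<in> J)}.
            inverse (phi s1 s2 (xlt q1 w r2 p2 / xlt q1 w r1 p1)))
     = (\<Prod>r\<in>J. \<Prod>s\<in>{1..a} - J. (w r - q2 * w s) / (w r - w s))
       * g (map (\<lambda>r. q1 * w r) (sorted_list_of_set J))"
proof -
  have "q1 \<noteq> 0" "q2 \<noteq> 0" using q(2-5) by auto
  have x1: "xlt q1 w r 1 = q1 * w r" for r by (simp add: xlt_def mult.commute)
  have scale: "q1 * x * inverse q1 = x" "q1 * x - inverse q1 * (q1 * y) = q1 * x - y"
    "q1 * x - q1 * y = q1 * (x - y)" "q1 * y / (q1 * x) = y / x" for x y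
    using \<open>q1 \<noteq> 0\<close> by (simp_all add: algebra_simps)
  have zeta: "(\<Prod>r\<in>{1..a}. \<Prod>p1\<in>{1..of_bool (r \<in> J)}. \<Prod>p2\<in>{1..of_bool (r \<in> J)}.
      if p1 < p2 then inverse (zeta q1 q2 q3 (xlt q1 w r p2 / xlt q1 w r p1)) else 1) = 1"
    unfolding prod_atLeastAtMost_of_bool by (simp cong: if_cong)
  have Y: "(\<Prod>r\<in>{1..a}. \<Prod>p\<in>{1..of_bool (r \<in> J)}. Yp q1 q2 a w r (xlt q1 w r p))
      = (\<Prod>r\<in>J. 1 / (1 - q1) * 1 * (\<Prod>s\<in>{1..a} - {r}. (w r - q2 * w s) / (w r - w s)))"
    unfolding prod_prod_atLeastAtMost_of_bool[OF finite_atLeastAtMost] Int_absorb1[OF J(1)] x1 Yp_def scale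
    by (simp add: mult.commute[of _ q2])
  have F: "F_tilde q1 q2 k g (pts (xlt q1 w) a (\<lambda>r. of_bool (r \<in> J)))
      = (q2 / q1) powi - int (card J * (card J - 1) div 2) * (1 - q1) ^ card J
        * (\<Prod>r\<in>J. \<Prod>s\<in>J - {r}. q1 * w r - w s) * g (map (\<lambda>r. q1 * w r) (sorted_list_of_set J))
        / (\<Prod>r\<in>J. \<Prod>s\<in>J - {r}. q1 * (w r - w s))"
    using prod_offdiag_nth[of "sorted_list_of_set J" "\<lambda>r s. q1 * w r - w s"]
      prod_offdiag_nth[of "sorted_list_of_set J" "\<lambda>r s. q1 * (w r - w s)"] finite_subset[OF J(1)]
    unfolding pts_of_bool[OF J(1)] x1 F_tilde_def J(2)[symmetric] by (simp add: scale)
  have Ph: "(\<Prod>r1\<in>{1..a}. \<Prod>r2\<in>{1..a} - {r1}. \<Prod>p1\<in>{1..of_bool (r1 \<in> J)}. \<Prod>p2\<in>{1..of_bool (r2 \<in> J)}.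
      inverse (phi s1 s2 (xlt q1 w r2 p2 / xlt q1 w r1 p1)))
      = (\<Prod>r\<in>J. \<Prod>s\<in>J - {r}. inverse (phi s1 s2 (w s / w r)))"
    unfolding prod_offdiag_atLeastAtMost_of_bool[OF finite_atLeastAtMost J(1)] x1 scale ..
  show ?thesis
    unfolding zeta mult_1_right unfolding Y F Ph
  proof (rule trans[OF offdiag_cancellation[OF finite_atLeastAtMost J(1), where \<rho> = "q2 / q1"]],
      goal_cases)
    case 1
    show ?case using q(1) by simp
  next
    case 2
    show ?case using \<open>q1 \<noteq> 0\<close> \<open>q2 \<noteq> 0\<close> by (simp add: power_int_minus)
  next
    case (3 r s)
    then have "r \<in> {1..a}" "s \<in> {1..a}" using J(1) by auto
    with 3 show ?case
      by (intro phi_pair_lt) (use q generic_wD[OF gw] in auto)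
  qed simp
qed

lemma Phi_gt_E_tilde:
  assumes q: "q1 \<noteq> 1" "s1\<^sup>2 = q1" "s2\<^sup>2 = q2" "s1 \<noteq> 0" "s2 \<noteq> 0" "q3 = inverse (q1 * q2)"
    and gw: "generic_w q1 q2 a w"
  shows "Phi_gt q1 q2 q3 s1 s2 zs a k (E_tilde q1 q3 k g) n w = RHS_a q2 zs a k g n w"
  unfolding Phi_gt_def RHS_a_def
proof (rule trans[OF sum_compositions_eq_sum_subsets sum.cong], goal_cases)
  case (1 m r)
  have "q1 \<noteq> 0" using q(2,4) by auto
  with 1 show ?case using E_tilde_pts_eq_0[OF _ q(1) gw] by simp
next
  case (3 J)
  then have J: "J \<subseteq> {1..a}" "card J = k" by auto
  have "(\<lambda>r. - int (of_bool (r \<in> J))) = (\<lambda>r. if r \<in> J then -1 else 0)" by auto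
  then show ?case using Phi_gt_summand_of_bool[OF q gw J] by simp
qed simp

lemma Phi_lt_F_tilde:
  assumes q: "q1 \<noteq> 1" "s1\<^sup>2 = q1" "s2\<^sup>2 = q2" "s1 \<noteq> 0" "s2 \<noteq> 0"
    and gw: "generic_w q1 q2 a w"
  shows "Phi_lt q1 q2 q3 s1 s2 a k (F_tilde q1 q2 k g) n w = RHS_b q1 q2 a k g n w"
  unfolding Phi_lt_def RHS_b_def
proof (rule trans[OF sum_compositions_eq_sum_subsets sum.cong], goal_cases)
  case (1 m r)
  have "q1 \<noteq> 0" using q(2,4) by auto
  with 1 show ?case using F_tilde_pts_eq_0[OF _ q(1) gw] by simp
next
  case (3 J)
  then have J: "J \<subseteq> {1..a}" "card J = k" by auto
  have "(\<lambda>r. int (of_bool (r \<in> J))) = (\<lambda>r. if r \<in> J then 1 else 0)" by auto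
  then show ?case using Phi_lt_summand_of_bool[OF q gw J] by simp
qed simp

theorem lemma3p7:
  fixes q1 q2 q3 s1 s2 :: complex and a k :: nat and zs :: "complex list"
    and g :: "complex list \<Rightarrow> complex"
  assumes "not_root_of_unity q1" "not_root_of_unity q2" "not_root_of_unity q3"
    and "q1 * q2 * q3 = 1"
    and "s1 ^ 2 = q1" "s2 ^ 2 = q2"
    and "a \<ge> 1" and "\<forall>z\<in>set zs. z \<noteq> 0"
    and "k \<ge> 1" and "laurent_poly k g" and "symmetric_fun k g"
  shows "(\<forall>n w. generic_w q1 q2 a w \<longrightarrow>
            Phi_gt q1 q2 q3 s1 s2 zs a k (E_tilde q1 q3 k g) n w = RHS_a q2 zs a k g n w)
       \<and> (\<forall>n w. generic_w q1 q2 a w \<longrightarrow>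
            Phi_lt q1 q2 q3 s1 s2 a k (F_tilde q1 q2 k g) n w = RHS_b q1 q2 a k g n w)"
proof -
  have q: "q1 \<noteq> 0" "q1 \<noteq> 1" "q2 \<noteq> 0"
    using assms(1,2) power_one_right[of q1] unfolding not_root_of_unity_def by auto
  have s: "s1 \<noteq> 0" "s2 \<noteq> 0"
    using q assms(5,6) by auto
  have "q3 = inverse (q1 * q2)"
    using q assms(4) by (simp add: field_simps)
  with q s show ?thesis
    by (simp add: Phi_gt_E_tilde Phi_lt_F_tilde assms(5,6))
qed

end
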